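(* Let $FO_{j,2}(\alpha,\lambda,n)$ be the number of partitions with perimeter $n$, largest part $\alpha$, exactly $\lambda$ parts, and exactly $j$ distinct even part sizes. Then, as formal power series, $$\sum_{\alpha,\lambda,n\geq 1}\sum_{j\geq 0} FO_{j,2}(\alpha,\lambda,n)\,x^\alpha y^\lambda z^j q^n=\frac{xyq\,(1-(y-xz)q)}{1-2yq+(y^2-x^2)q^2+(1-z)x^2yq^3}.$$
   Context: A partition is a finite nonincreasing sequence of positive integers (its parts); its size is not fixed. For a partition $\pi$ with largest part $\alpha(\pi)$ and number of parts $\lambda(\pi)$, its perimeter is $\alpha(\pi)+\lambda(\pi)-1$. (Note $FO_{j,2}(\alpha,\lambda,n)=0$ unless $n=\alpha+\lambda-1$.) *)

theory Defs
  imports "HOL-Computational_Algebra.Formal_Power_Series"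
begin

definition is_partition :: "nat list \<Rightarrow> bool" where
  "is_partition p \<longleftrightarrow> sorted_wrt (\<ge>) p \<and> (\<forall>a\<in>set p. 0 < a)"

text \<open>Largest part (maximum of the parts; 0 for the empty partition, which is excluded below)
  and number of parts.\<close>
definition largest_part :: "nat list \<Rightarrow> nat" where
  "largest_part p = Max (insert 0 (set p))"

definition num_parts :: "nat list \<Rightarrow> nat" where
  "num_parts p = length p"

definition perimeter :: "nat list \<Rightarrow> nat" where
  "perimeter p = largest_part p + num_parts p - 1"

definition num_even_sizes :: "nat list \<Rightarrow> nat" where
  "num_even_sizes p = card {a \<in> set p. even a}"

definition FO2 :: "nat \<Rightarrow> nat \<Rightarrow> nat \<Rightarrow> nat \<Rightarrow> nat" where
  "FO2 j a l n = card {p. is_partition p \<and> perimeter p = n \<and> largest_part p = a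
                          \<and> num_parts p = l \<and> num_even_sizes p = j}"

text \<open>Formal power series in four variables x, y, z, q over the rationals, realised as
  nested power series: the outermost variable is q, then z, then y, then x (innermost).\<close>
type_synonym fps4 = "rat fps fps fps fps"

definition qX :: fps4 where "qX = fps_X"
definition zX :: fps4 where "zX = fps_const fps_X"
definition yX :: fps4 where "yX = fps_const (fps_const fps_X)"
definition xX :: fps4 where "xX = fps_const (fps_const (fps_const fps_X))"

definition FO2_gf :: fps4 where
  "FO2_gf = Abs_fps (\<lambda>n. Abs_fps (\<lambda>j. Abs_fps (\<lambda>l. Abs_fps (\<lambda>a. 
      if 1 \<le> a \<and> 1 \<le> l \<and> 1 \<le> n then of_nat (FO2 j a l n) else 0))))"

end

(*
  Let P_a(y, z) count the partitions with largest part a, y marking the number of parts and z the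
  number of distinct even part sizes. Deleting the largest part gives
  (1 - y) P_a = y z^[a even] (P_0 + ... + P_(a-1)), and since exactly one of two consecutive
  sizes is even this collapses to (1 - y)^2 P_(a+2) = (1 - y + yz) P_a for a >= 1. A partition
  with largest part a and l parts has perimeter a + l - 1, so the full series is the sum of
  x^a q^(a-1) P_a(yq, z), and the denominator factors as (1 - yq)^2 - (xq)^2 (1 - yq + yzq).
  Multiplying by it therefore kills every term except those of a = 1 and a = 2.
*)
theory Submission
  imports Defs
begin

unbundle fps_syntax

definition partitions_with :: "nat \<Rightarrow> nat \<Rightarrow> nat list set" where
  "partitions_with a l = {p. is_partition p \<and> largest_part p = a \<and> length p = l}"

lemma le_largest_part: "x \<in> set p \<Longrightarrow> x \<le> largest_part p"
  by (simp add: largest_part_def)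

lemma largest_part_le_iff: "largest_part p \<le> a \<longleftrightarrow> (\<forall>x\<in>set p. x \<le> a)"
  by (simp add: largest_part_def)

lemma largest_part_in_set: "largest_part p \<noteq> 0 \<Longrightarrow> largest_part p \<in> set p"
  using Max_in[of "insert 0 (set p)"] by (auto simp: largest_part_def)

lemma largest_part_Cons: "\<forall>x\<in>set t. x \<le> a \<Longrightarrow> largest_part (a # t) = a"
  unfolding largest_part_def by (intro Max_eqI) auto

lemma is_partition_Cons:
  "is_partition (a # t) \<longleftrightarrow> is_partition t \<and> (\<forall>x\<in>set t. x \<le> a) \<and> 0 < a"
  by (auto simp: is_partition_def)

lemma num_even_sizes_Cons:
  "num_even_sizes (a # t) = num_even_sizes t + (if a \<in> set t then 0 else of_bool (even a))"
proof -
  have "{x \<in> set (a # t). even x} =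
      (if even a then insert a {x \<in> set t. even x} else {x \<in> set t. even x})"
    by auto
  then show ?thesis
    by (simp add: num_even_sizes_def insert_absorb)
qed

lemma finite_partitions_with: "finite (partitions_with a l)"
proof (rule finite_subset)
  show "partitions_with a l \<subseteq> {p. set p \<subseteq> {0..a} \<and> length p = l}"
    by (auto simp: partitions_with_def dest: le_largest_part)
qed (simp add: finite_lists_length_eq)

lemma partitions_with_0: "partitions_with 0 l = (if l = 0 then {[]} else {})"
proof -
  have "p = []" if "is_partition p" "largest_part p = 0" for p
    using that le_largest_part[of _ p] by (cases p) (auto simp: is_partition_def)
  moreover have "is_partition []" "largest_part [] = 0"
    by (simp_all add: is_partition_def largest_part_def)
  ultimately show ?thesis
    by (auto simp: partitions_with_def)
qed

lemma partitions_with_no_parts: "partitions_with a 0 = (if a = 0 then {[]} else {})"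
  by (auto simp: partitions_with_def largest_part_def is_partition_def)

lemma partitions_with_Suc:
  assumes "0 < a"
  shows "partitions_with a (Suc l) = Cons a ` (\<Union>b\<in>{..a}. partitions_with b l)"
proof (intro equalityI subsetI)
  fix p assume "p \<in> partitions_with a (Suc l)"
  then obtain x t where p: "p = x # t" and t: "is_partition t" "\<forall>y\<in>set t. y \<le> x"
    and "largest_part p = a" "length t = l"
    by (cases p) (auto simp: partitions_with_def is_partition_Cons)
  then have "x = a"
    by (simp add: largest_part_Cons)
  with t \<open>length t = l\<close> show "p \<in> Cons a ` (\<Union>b\<in>{..a}. partitions_with b l)"
    by (auto simp: p partitions_with_def largest_part_le_iff)
next
  fix p assume "p \<in> Cons a ` (\<Union>b\<in>{..a}. partitions_with b l)"
  then obtain t where "p = a # t" "is_partition t" "largest_part t \<le> a" "length t = l"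
    by (auto simp: partitions_with_def)
  with assms show "p \<in> partitions_with a (Suc l)"
    by (simp add: partitions_with_def is_partition_Cons largest_part_le_iff largest_part_Cons)
qed

text \<open>The outer variable \<open>y\<close> counts parts, the inner one \<open>z\<close> distinct even part sizes.\<close>
definition part_gf :: "nat \<Rightarrow> rat fps fps" where
  "part_gf a = Abs_fps (\<lambda>l. \<Sum>p\<in>partitions_with a l. fps_X ^ num_even_sizes p)"

definition even_size_weight :: "nat \<Rightarrow> rat fps" where
  "even_size_weight a = (if even a then fps_X else 1)"

lemma part_gf_0: "part_gf 0 = 1"
  by (intro fps_ext) (simp add: part_gf_def partitions_with_0 num_even_sizes_def)

lemma part_gf_Suc_coeff:
  assumes "0 < a"
  shows "part_gf a $ Suc l = part_gf a $ l + even_size_weight a * (\<Sum>b<a. part_gf b $ l)"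
proof -
  let ?w = "\<lambda>p. fps_X ^ num_even_sizes p :: rat fps"
  have weight_Cons: "?w (a # t) = (if b = a then 1 else even_size_weight a) * ?w t"
    if "t \<in> partitions_with b l" "b \<le> a" for t b
  proof (cases "b = a")
    case True
    with that assms have "a \<in> set t"
      using largest_part_in_set[of t] by (simp add: partitions_with_def)
    with True show ?thesis
      by (simp add: num_even_sizes_Cons)
  next
    case False
    with that have "a \<notin> set t"
      using le_largest_part[of a t] by (auto simp: partitions_with_def)
    with False show ?thesis
      by (simp add: num_even_sizes_Cons even_size_weight_def power_add)
  qed
  have "part_gf a $ Suc l = (\<Sum>t\<in>(\<Union>b\<in>{..a}. partitions_with b l). ?w (a # t))"
    by (simp add: part_gf_def partitions_with_Suc[OF assms] sum.reindex)
  also have "\<dots> = (\<Sum>b\<le>a. \<Sum>t\<in>partitions_with b l. ?w (a # t))"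
    by (rule sum.UNION_disjoint) (auto simp: finite_partitions_with, auto simp: partitions_with_def)
  also have "\<dots> = (\<Sum>b\<le>a. (if b = a then 1 else even_size_weight a) * part_gf b $ l)"
    by (intro sum.cong refl) (simp add: part_gf_def weight_Cons sum_distrib_left)
  also have "\<dots> = part_gf a $ l + even_size_weight a * (\<Sum>b<a. part_gf b $ l)"
    by (simp add: lessThan_Suc_atMost[symmetric] sum_distrib_left)
  finally show ?thesis .
qed

lemma part_gf_recurrence:
  assumes "0 < a"
  shows "(1 - fps_X) * part_gf a = fps_X * (fps_const (even_size_weight a) * (\<Sum>b<a. part_gf b))"
proof (rule fps_ext)
  fix l
  show "((1 - fps_X) * part_gf a) $ l = (fps_X * (fps_const (even_size_weight a) * (\<Sum>b<a. part_gf b))) $ l"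
    using assms by (cases l)
      (simp_all add: algebra_simps part_gf_Suc_coeff fps_sum_nth,
       simp add: part_gf_def partitions_with_no_parts)
qed

lemma part_gf_partial_sum_recurrence:
  assumes "0 < a"
  shows "(1 - fps_X) * (\<Sum>b<Suc a. part_gf b) =
    (1 - fps_X + fps_X * fps_const (even_size_weight a)) * (\<Sum>b<a. part_gf b)"
  using part_gf_recurrence[OF assms] by (simp add: algebra_simps)

text \<open>Of two consecutive part sizes exactly one is even, so the product of their weights is the
  same for every \<open>a\<close>.\<close>
lemma even_size_weight_consecutive:
  "(1 - fps_X + fps_X * fps_const (even_size_weight (Suc a))) *
     (1 - fps_X + fps_X * fps_const (even_size_weight a)) =
   (1 - fps_X + fps_X * fps_const fps_X :: rat fps fps)"
  by (simp add: even_size_weight_def algebra_simps)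

lemma part_gf_two_step_recurrence:
  assumes "0 < b"
  shows "(1 - fps_X)^2 * part_gf (Suc (Suc b)) = (1 - fps_X + fps_X * fps_const fps_X) * part_gf b"
proof -
  \<comment> \<open>An extra factor \<open>1 - y\<close> lets both partial-sum recurrences be used before cancelling it.\<close>
  let ?Y = "1 - fps_X :: rat fps fps"
  let ?c = "\<lambda>a. ?Y + fps_X * fps_const (even_size_weight a)"
  let ?S = "\<lambda>a. \<Sum>b<a. part_gf b"
  let ?u = "fps_X * fps_const (even_size_weight b)"
  have "?Y \<noteq> 0"
    by (rule fps_nonzeroI[of _ 0]) simp
  have "?Y * ((1 - fps_X)^2 * part_gf (Suc (Suc b))) = ?u * ?Y * (?Y * ?S (Suc (Suc b)))"
    using part_gf_recurrence[of "Suc (Suc b)"]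
    by (simp add: power2_eq_square even_size_weight_def ac_simps)
  also have "\<dots> = ?u * ?c (Suc b) * (?Y * ?S (Suc b))"
    using part_gf_partial_sum_recurrence[of "Suc b"] by (simp add: ac_simps)
  also have "\<dots> = (?c (Suc b) * ?c b) * (?u * ?S b)"
    using part_gf_partial_sum_recurrence[OF assms] by (simp add: ac_simps)
  also have "\<dots> = (1 - fps_X + fps_X * fps_const fps_X) * (?Y * part_gf b)"
    by (simp only: even_size_weight_consecutive part_gf_recurrence[OF assms] mult.assoc)
  also have "\<dots> = ?Y * ((1 - fps_X + fps_X * fps_const fps_X) * part_gf b)"
    by (simp only: ac_simps)
  finally show ?thesis
    using \<open>?Y \<noteq> 0\<close> by simp
qed

lemma part_gf_1: "(1 - fps_X)^2 * part_gf 1 = fps_X * (1 - fps_X)"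
proof -
  have "(1 - fps_X) * part_gf 1 = fps_X"
    using part_gf_recurrence[of 1] by (simp add: part_gf_0 even_size_weight_def)
  then show ?thesis
    by (simp add: power2_eq_square mult.assoc mult.commute[of fps_X])
qed

lemma part_gf_2: "(1 - fps_X)^2 * part_gf 2 = fps_X * fps_const fps_X"
proof -
  have "(1 - fps_X) * (\<Sum>b<2. part_gf b) = 1"
    using part_gf_partial_sum_recurrence[of 1]
    by (simp add: numeral_2_eq_2 part_gf_0 even_size_weight_def)
  then show ?thesis
    using part_gf_recurrence[of 2]
    by (simp add: power2_eq_square even_size_weight_def mult.assoc mult.left_commute[of "1 - fps_X"])
qed

lemma qX_mult_nth: "(qX * H) $ n $ j $ l $ a = (if n = 0 then 0 else H $ (n - 1) $ j $ l $ a)"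
  by (cases n) (simp_all add: qX_def)

lemma qX_nth: "qX $ n $ j $ l $ a = (if n = 1 \<and> j = 0 \<and> l = 0 \<and> a = 0 then 1 else 0)"
  by (cases "n = 1") (simp_all add: qX_def)

lemma zX_mult_nth: "(zX * H) $ n $ j $ l $ a = (if j = 0 then 0 else H $ n $ (j - 1) $ l $ a)"
  by (cases j) (simp_all add: zX_def)

lemma yX_mult_nth: "(yX * H) $ n $ j $ l $ a = (if l = 0 then 0 else H $ n $ j $ (l - 1) $ a)"
  by (cases l) (simp_all add: yX_def)

lemma xX_mult_nth: "(xX * H) $ n $ j $ l $ a = (if a = 0 then 0 else H $ n $ j $ l $ (a - 1))"
  by (cases a) (simp_all add: xX_def)

text \<open>The coefficient of \<open>y^l z^j\<close> in \<open>f a\<close> becomes that of \<open>x^a y^l z^j q^(a + l - 1)\<close>;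
  the series \<open>f 0\<close> is discarded.\<close>
definition perimeter_lift :: "(nat \<Rightarrow> rat fps fps) \<Rightarrow> fps4" where
  "perimeter_lift f = Abs_fps (\<lambda>n. Abs_fps (\<lambda>j. Abs_fps (\<lambda>l. Abs_fps (\<lambda>a.
     if 0 < a \<and> n + 1 = a + l then f a $ l $ j else 0))))"

lemma perimeter_lift_nth:
  "perimeter_lift f $ n $ j $ l $ a = (if 0 < a \<and> n + 1 = a + l then f a $ l $ j else 0)"
  by (simp add: perimeter_lift_def)

lemma perimeter_lift_cong: "(\<And>a. 0 < a \<Longrightarrow> f a = g a) \<Longrightarrow> perimeter_lift f = perimeter_lift g"
  by (simp add: fps_eq_iff perimeter_lift_nth)

lemma perimeter_lift_add: "perimeter_lift (\<lambda>a. f a + g a) = perimeter_lift f + perimeter_lift g"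
  by (simp add: fps_eq_iff perimeter_lift_nth)

lemma perimeter_lift_diff: "perimeter_lift (\<lambda>a. f a - g a) = perimeter_lift f - perimeter_lift g"
  by (simp add: fps_eq_iff perimeter_lift_nth)

lemma yq_mult_perimeter_lift: "yX * qX * perimeter_lift f = perimeter_lift (\<lambda>a. fps_X * f a)"
  by (auto simp: fps_eq_iff mult.assoc yX_mult_nth qX_mult_nth perimeter_lift_nth)

lemma z_mult_perimeter_lift: "zX * perimeter_lift f = perimeter_lift (\<lambda>a. fps_const fps_X * f a)"
  by (auto simp: fps_eq_iff zX_mult_nth perimeter_lift_nth)

lemma xq_mult_perimeter_lift:
  "xX * qX * perimeter_lift f = perimeter_lift (\<lambda>a. if a \<le> 1 then 0 else f (a - 1))"
  by (auto simp: fps_eq_iff mult.assoc xX_mult_nth qX_mult_nth perimeter_lift_nth)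

lemma xyq_eq_perimeter_lift: "xX * yX * qX = perimeter_lift (\<lambda>a. if a = 1 then fps_X else 0)"
proof -
  have "(xX * (yX * qX)) $ n $ j $ l $ a =
      perimeter_lift (\<lambda>a. if a = 1 then fps_X else 0) $ n $ j $ l $ a" for n j l a
    by (auto simp: xX_mult_nth yX_mult_nth qX_nth perimeter_lift_nth)
  then show ?thesis
    by (simp add: fps_eq_iff mult.assoc)
qed

lemma one_minus_yq_mult_perimeter_lift:
  "(1 - yX * qX) * perimeter_lift f = perimeter_lift (\<lambda>a. (1 - fps_X) * f a)"
  by (simp add: left_diff_distrib yq_mult_perimeter_lift flip: perimeter_lift_diff)

lemma one_minus_yq_plus_yqz_mult_perimeter_lift:
  "(1 - yX * qX + yX * qX * zX) * perimeter_lift f =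
     perimeter_lift (\<lambda>a. (1 - fps_X + fps_X * fps_const fps_X) * f a)"
proof -
  have "(1 - yX * qX + yX * qX * zX) * perimeter_lift f =
      perimeter_lift f - yX * qX * perimeter_lift f + yX * qX * (zX * perimeter_lift f)"
    by (simp add: algebra_simps)
  also have "\<dots> = perimeter_lift (\<lambda>a. f a - fps_X * f a + fps_X * (fps_const fps_X * f a))"
    by (simp add: yq_mult_perimeter_lift z_mult_perimeter_lift perimeter_lift_add perimeter_lift_diff)
  finally show ?thesis
    by (simp add: algebra_simps)
qed

lemma xq_squared_mult_perimeter_lift:
  "(xX * qX)^2 * perimeter_lift f = perimeter_lift (\<lambda>a. if a \<le> 2 then 0 else f (a - 2))"
proof -
  have "(xX * qX)^2 * perimeter_lift f = xX * qX * (xX * qX * perimeter_lift f)"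
    by (simp add: power2_eq_square mult.assoc)
  also have "\<dots> = perimeter_lift (\<lambda>a. if a \<le> 2 then 0 else f (a - 2))"
    by (simp add: xq_mult_perimeter_lift) (intro perimeter_lift_cong, auto simp: numeral_2_eq_2)
  finally show ?thesis .
qed

lemma fps_sum_X_power_nth:
  "finite A \<Longrightarrow> (\<Sum>x\<in>A. fps_X ^ w x) $ j = (of_nat (card {x\<in>A. w x = j}) :: 'a::comm_ring_1)"
  by (simp add: fps_sum_nth of_bool_def[symmetric] eq_commute[of j] Int_def)

lemma FO2_gf_eq_perimeter_lift: "FO2_gf = perimeter_lift part_gf"
proof -
  have FO2_eq: "FO2 j a l n =
      (if n + 1 = a + l then card {p\<in>partitions_with a l. num_even_sizes p = j} else 0)"
    if "0 < a" for j a l n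
  proof -
    have "{p. is_partition p \<and> perimeter p = n \<and> largest_part p = a \<and> num_parts p = l
        \<and> num_even_sizes p = j} =
        (if n + 1 = a + l then {p\<in>partitions_with a l. num_even_sizes p = j} else {})"
      using that by (auto simp: partitions_with_def perimeter_def num_parts_def)
    then show ?thesis
      by (simp add: FO2_def)
  qed
  have "FO2_gf $ n $ j $ l $ a = perimeter_lift part_gf $ n $ j $ l $ a" for n j l a
  proof (cases "0 < a \<and> 0 < l")
    case True
    then show ?thesis
      by (auto simp: FO2_gf_def perimeter_lift_nth part_gf_def fps_sum_X_power_nth
          finite_partitions_with FO2_eq)
  next
    case False
    then show ?thesis
      by (auto simp: FO2_gf_def perimeter_lift_nth part_gf_def partitions_with_no_parts)
  qed
  then show ?thesis
    by (simp add: fps_eq_iff)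
qed

lemma part_gf_denominator_recurrence:
  assumes "0 < a"
  shows "(1 - fps_X)^2 * part_gf a -
      (if a \<le> 2 then 0 else (1 - fps_X + fps_X * fps_const fps_X) * part_gf (a - 2)) =
    (if a = 1 then fps_X * (1 - fps_X) else if a = 2 then fps_X * fps_const fps_X else 0)"
proof -
  consider "a = 1" | "a = 2" | "2 < a"
    using assms by linarith
  then show ?thesis
  proof cases
    case 1
    then show ?thesis
      using part_gf_1 by simp
  next
    case 2
    then show ?thesis
      by (simp add: part_gf_2)
  next
    case 3
    then have "Suc (Suc (a - 2)) = a"
      by simp
    with 3 show ?thesis
      using part_gf_two_step_recurrence[of "a - 2"] by simp
  qed
qed

lemma FO2_gf_times_denominator:
  "FO2_gf * ((1 - yX * qX)^2 - (xX * qX)^2 * (1 - yX * qX + yX * qX * zX)) =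
    perimeter_lift (\<lambda>a. (1 - fps_X)^2 * part_gf a -
      (if a \<le> 2 then 0 else (1 - fps_X + fps_X * fps_const fps_X) * part_gf (a - 2)))"
proof -
  have "FO2_gf * ((1 - yX * qX)^2 - (xX * qX)^2 * (1 - yX * qX + yX * qX * zX)) =
      (1 - yX * qX) * ((1 - yX * qX) * perimeter_lift part_gf) -
      (xX * qX)^2 * ((1 - yX * qX + yX * qX * zX) * perimeter_lift part_gf)"
    by (simp add: FO2_gf_eq_perimeter_lift power2_eq_square algebra_simps)
  also have "\<dots> = perimeter_lift (\<lambda>a. (1 - fps_X) * ((1 - fps_X) * part_gf a)) -
      perimeter_lift (\<lambda>a. if a \<le> 2 then 0 else (1 - fps_X + fps_X * fps_const fps_X) * part_gf (a - 2))"
    by (simp only: one_minus_yq_mult_perimeter_lift one_minus_yq_plus_yqz_mult_perimeter_lift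
        xq_squared_mult_perimeter_lift)
  finally show ?thesis
    by (simp only: power2_eq_square mult.assoc perimeter_lift_diff)
qed

lemma numerator_eq_perimeter_lift:
  "xX * yX * qX * (1 - (yX - xX * zX) * qX) =
    perimeter_lift (\<lambda>a. if a = 1 then fps_X * (1 - fps_X) else if a = 2 then fps_X * fps_const fps_X else 0)"
proof -
  have "xX * yX * qX * (1 - (yX - xX * zX) * qX) =
      (1 - yX * qX) * (xX * yX * qX) + zX * (xX * qX * (xX * yX * qX))"
    by (simp add: algebra_simps)
  then show ?thesis
    by (simp add: xyq_eq_perimeter_lift one_minus_yq_mult_perimeter_lift z_mult_perimeter_lift
        xq_mult_perimeter_lift flip: perimeter_lift_add)
      (intro perimeter_lift_cong, auto simp: mult.commute)
qed

text \<open>The library's inverse laws require a division ring, but here the coefficients are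
  themselves power series.\<close>
lemma fps_mult_inverse_eq_1:
  fixes f :: "'a::{ring_1,inverse} fps"
  assumes "f $ 0 * inverse (f $ 0) = 1"
  shows "f * inverse f = 1"
  using fps_right_inverse[OF assms] by (simp add: fps_inverse_def)

theorem mainTheorem3:
  shows "FO2_gf =
    (xX * yX * qX * (1 - (yX - xX * zX) * qX)) *
    inverse (1 - 2 * yX * qX + (yX ^ 2 - xX ^ 2) * qX ^ 2 + (1 - zX) * xX ^ 2 * yX * qX ^ 3)"
proof -
  let ?D = "1 - 2 * yX * qX + (yX ^ 2 - xX ^ 2) * qX ^ 2 + (1 - zX) * xX ^ 2 * yX * qX ^ 3"
  have factored: "?D = (1 - yX * qX)^2 - (xX * qX)^2 * (1 - yX * qX + yX * qX * zX)"
    by (simp add: algebra_simps power2_eq_square power3_eq_cube)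
  have times_denominator: "FO2_gf * ?D = xX * yX * qX * (1 - (yX - xX * zX) * qX)"
    unfolding factored FO2_gf_times_denominator numerator_eq_perimeter_lift
    by (intro perimeter_lift_cong part_gf_denominator_recurrence)
  have invertible: "?D * inverse ?D = 1"
  proof (rule fps_mult_inverse_eq_1)
    have "inverse (1 :: rat fps fps fps) = 1"
      by (intro fps_inverse_one') simp
    then show "?D $ 0 * inverse (?D $ 0) = 1"
      by (simp add: qX_def power2_eq_square power3_eq_cube)
  qed
  have "FO2_gf = FO2_gf * (?D * inverse ?D)"
    by (simp only: invertible mult_1_right)
  also have "\<dots> = xX * yX * qX * (1 - (yX - xX * zX) * qX) * inverse ?D"
    by (simp only: times_denominator flip: mult.assoc)
  finally show ?thesis .
qed

end
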